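(* Let $\mathbf{X}=\mathbf{Y}=\mathbf{Z}=\{0,1\}$, $N\ge1$ fixed, and let $(X_n,Y_n,Z_n)$, $n=1,\dots,N$, be random elements of $\{0,1\}^3$ on a common probability space. Suppose there are a probability distribution $\pi$ on $\{0,1\}$ and probability distributions $q(\cdot\mid x,z)$ on $\{0,1\}$, $(x,z)\in\{0,1\}^2$, such that for every $n\in[N]$, writing $\mathcal{H}_{n-1}:=\sigma\bigl((X_i,Y_i,Z_i):i<n\bigr)$: (i) conditionally on $\mathcal{H}_{n-1}$, $Z_n$ has distribution $\pi$; (ii) the conditional distribution of $X_n$ given $\mathcal{H}_{n-1}$ and $Z_n$ is arbitrary; (iii) conditionally on $\sigma(\mathcal{H}_{n-1},Z_n,X_n)$, $Y_n$ has distribution $q(\cdot\mid X_n,Z_n)$. Fix $\delta>0$ and $\tilde x\in\{0,1\}$, and let $Y$ be a further random variable on the same space with $\mathbb{P}(Y=y)=\sum_{z\in\{0,1\}}q(y\mid\tilde x,z)\pi(z)$ for $y\in\{0,1\}$. Define \[ \Gamma:=\Bigl\{y\in\{0,1\}:\ \sum_{z\in\{0,1\}}\hat p(z)\,\check p(y\mid\tilde x,z)+2\sqrt{\frac{\ln\frac{12}{\delta}}{2N}}+\sum_{z\in\{0,1\}}\sqrt{\frac{2\ln\log_2\lfloor\!\lfloor\#\tilde x z\rfloor\!\rfloor+\ln\frac{20}{\delta}}{2\lfloor\!\lfloor\#\tilde x z\rfloor\!\rfloor}}>\frac{\delta}{2}\Bigr\}, \] with the convention $\ln\log_2 1:=\infty$.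 Then $\Gamma$ is a $(1-\delta)$-prediction set for $Y$, i.e. $\mathbb{P}(Y\notin\Gamma)\le\delta$.
   Context: Notation: for $m\le N$, $\#_m\tilde x z:=|\{n\in[m]:(X_n,Z_n)=(\tilde x,z)\}|$, $\#\tilde x z:=\#_N\tilde x z$, $\#z:=|\{n\in[N]:Z_n=z\}|$, $\hat p(z):=\#z/N$. For an integer $n\ge2$, $\lfloor\!\lfloor n\rfloor\!\rfloor$ is the largest $2^k$, $k\in\{1,2,\dots\}$, with $2^k\le n$; for $n<2$, $\lfloor\!\lfloor n\rfloor\!\rfloor:=1$. The estimate $\check p(y\mid\tilde x,z):=|\{n\in[N]:\#_n\tilde x z\le\lfloor\!\lfloor\#\tilde x z\rfloor\!\rfloor,\ X_n=\tilde x,\ Y_n=y,\ Z_n=z\}|/\lfloor\!\lfloor\#\tilde x z\rfloor\!\rfloor$ is the fraction of the first $\lfloor\!\lfloor\#\tilde x z\rfloor\!\rfloor$ observations with $(X_n,Z_n)=(\tilde x,z)$ for which $Y_n=y$ (its value is irrelevant when the corresponding term is infinite). The setting is the strong (adaptive) interpretation of the causal diagram $Z\to X$, $Z\to Y$, $X\to Y$, and $Y$'s distribution is the causal effect of setting $X=\tilde x$. *)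

theory Defs
  imports "HOL-Probability.Probability"
begin

text \<open>The binary alphabet {0,1} is represented by bool (False = 0, True = 1).\<close>

definition floor2 :: "nat \<Rightarrow> nat" where
  "floor2 n = (if n < 2 then 1 else (GREATEST m. \<exists>k\<ge>1. m = 2 ^ k \<and> m \<le> n))"

definition cnt :: "(nat \<Rightarrow> 'a \<Rightarrow> bool) \<Rightarrow> (nat \<Rightarrow> 'a \<Rightarrow> bool) \<Rightarrow> nat \<Rightarrow> bool \<Rightarrow> bool \<Rightarrow> 'a \<Rightarrow> nat" where
  "cnt X Z m x z \<omega> = card {n \<in> {1..m}. X n \<omega> = x \<and> Z n \<omega> = z}"

definition phat :: "(nat \<Rightarrow> 'a \<Rightarrow> bool) \<Rightarrow> nat \<Rightarrow> bool \<Rightarrow> 'a \<Rightarrow> real" where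
  "phat Z N z \<omega> = real (card {n \<in> {1..N}. Z n \<omega> = z}) / real N"

definition pcheck :: "(nat \<Rightarrow> 'a \<Rightarrow> bool) \<Rightarrow> (nat \<Rightarrow> 'a \<Rightarrow> bool) \<Rightarrow> (nat \<Rightarrow> 'a \<Rightarrow> bool)
    \<Rightarrow> nat \<Rightarrow> bool \<Rightarrow> bool \<Rightarrow> bool \<Rightarrow> 'a \<Rightarrow> real" where
  "pcheck X Y Z N y x z \<omega> =
     real (card {n \<in> {1..N}. cnt X Z n x z \<omega> \<le> floor2 (cnt X Z N x z \<omega>)
                   \<and> X n \<omega> = x \<and> Y n \<omega> = y \<and> Z n \<omega> = z})
     / real (floor2 (cnt X Z N x z \<omega>))"

text \<open>The per-stratum width term, with the convention ln log_2 1 = \<infinity>.\<close>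
definition width :: "nat \<Rightarrow> real \<Rightarrow> ereal" where
  "width c \<delta> = (if floor2 c < 2 then \<infinity>
     else ereal (sqrt ((2 * ln (log 2 (real (floor2 c))) + ln (20 / \<delta>)) / (2 * real (floor2 c)))))"

definition Gamma :: "(nat \<Rightarrow> 'a \<Rightarrow> bool) \<Rightarrow> (nat \<Rightarrow> 'a \<Rightarrow> bool) \<Rightarrow> (nat \<Rightarrow> 'a \<Rightarrow> bool)
    \<Rightarrow> nat \<Rightarrow> real \<Rightarrow> bool \<Rightarrow> 'a \<Rightarrow> bool set" where
  "Gamma X Y Z N \<delta> xt \<omega> = {y.
     ereal ((\<Sum>z\<in>UNIV. phat Z N z \<omega> * pcheck X Y Z N y xt z \<omega>)
            + 2 * sqrt (ln (12 / \<delta>) / (2 * real N)))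
     + (\<Sum>z\<in>UNIV. width (cnt X Z N xt z \<omega>) \<delta>) > ereal (\<delta> / 2)}"

text \<open>History event: (X_i, Y_i, Z_i) = h i for all i with 1 \<le> i < n.
  Events of this form (over all h) generate H_{n-1}, which is a finite sigma-algebra.\<close>
definition hist_event :: "'a measure \<Rightarrow> (nat \<Rightarrow> 'a \<Rightarrow> bool) \<Rightarrow> (nat \<Rightarrow> 'a \<Rightarrow> bool) \<Rightarrow> (nat \<Rightarrow> 'a \<Rightarrow> bool)
    \<Rightarrow> nat \<Rightarrow> (nat \<Rightarrow> bool \<times> bool \<times> bool) \<Rightarrow> 'a set" where
  "hist_event M X Y Z n h = {\<omega> \<in> space M. \<forall>i\<in>{1..<n}. (X i \<omega>, Y i \<omega>, Z i \<omega>) = h i}"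

end

theory Submission
  imports Defs "HOL-Probability.Hoeffding"
begin

text \<open>
  Outside a bad event, \<open>\<Sum>z. phat z * pcheck y z\<close> plus the widths is an upper confidence bound
  for \<open>P(Y = y) = \<Sum>z. q(y | x, z) \<pi>(z)\<close>: it suffices that no \<open>phat z\<close> lies far below \<open>\<pi>(z)\<close>
  and that no frequency of \<open>Y = y\<close> among the first \<open>2^k\<close> samples with \<open>(X, Z) = (x, z)\<close> lies far
  below \<open>q(y | x, z)\<close>. Each such lower deviation is bounded by a Hoeffding inequality for
  adaptively selected Bernoulli trials, proved with the exponential supermartingale
  \<open>exp (\<lambda> (p * #selected - #successes) - #selected * \<lambda>\<^sup>2 / 8)\<close> on the finite tree of histories.
  A union bound over \<open>z\<close> and over the dyadic sizes \<open>2^k\<close>, weighted by \<open>1 / k\<^sup>2\<close>, bounds the bad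
  event by \<open>\<delta>/6 + \<delta>/5 \<le> \<delta>/2\<close>. Hence for each \<open>y\<close> either \<open>P(Y = y) \<le> \<delta>/2\<close>, or \<open>y \<in> \<Gamma>\<close> outside
  an event of probability at most \<open>\<delta>/2\<close>; summing over the two values of \<open>y\<close> gives the claim.
\<close>

type_synonym sample = "bool \<times> bool \<times> bool"

text \<open>Histories are stored newest first, so that \<open>t # hs\<close> is \<open>hs\<close> extended by the next sample \<open>t\<close>.\<close>
fun history :: "(nat \<Rightarrow> 'a \<Rightarrow> bool) \<Rightarrow> (nat \<Rightarrow> 'a \<Rightarrow> bool) \<Rightarrow> (nat \<Rightarrow> 'a \<Rightarrow> bool)
    \<Rightarrow> nat \<Rightarrow> 'a \<Rightarrow> sample list" where
  "history X Y Z 0 \<omega> = []"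
| "history X Y Z (Suc n) \<omega> = (X (Suc n) \<omega>, Y (Suc n) \<omega>, Z (Suc n) \<omega>) # history X Y Z n \<omega>"

lemma length_history [simp]: "length (history X Y Z n \<omega>) = n"
  by (induction n) auto

lemma nth_history: "j < n \<Longrightarrow> history X Y Z n \<omega> ! j = (X (n - j) \<omega>, Y (n - j) \<omega>, Z (n - j) \<omega>)"
  by (induction n arbitrary: j) (auto simp: nth_Cons split: nat.split)

lemma history_eq_iff:
  "history X Y Z (length hs) \<omega> = hs \<longleftrightarrow>
     (\<forall>i\<in>{1..<Suc (length hs)}. (X i \<omega>, Y i \<omega>, Z i \<omega>) = hs ! (length hs - i))"
  (is "?lhs \<longleftrightarrow> ?rhs")
proof
  assume ?lhs
  then show ?rhs
    using nth_history[of "length hs - i" "length hs" X Y Z \<omega> for i] by force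
next
  assume ?rhs
  show ?lhs
  proof (rule nth_equalityI)
    fix j assume "j < length (history X Y Z (length hs) \<omega>)"
    then have "length hs - j \<in> {1..<Suc (length hs)}" "length hs - (length hs - j) = j"
      by auto
    with \<open>?rhs\<close> \<open>j < _\<close> show "history X Y Z (length hs) \<omega> ! j = hs ! j"
      by (metis length_history nth_history)
  qed simp
qed

lemma finite_lists_length: "finite {xs :: 'b::finite list. length xs = n}"
  using finite_lists_length_eq[of "UNIV :: 'b set" n] by simp

lemma sum_lists_length_Suc:
  fixes f :: "'b::finite list \<Rightarrow> 'c::comm_monoid_add"
  shows "(\<Sum>hs | length hs = Suc n. f hs) = (\<Sum>hs | length hs = n. \<Sum>t\<in>UNIV. f (t # hs))"
proof -
  have eq: "{hs :: 'b list. length hs = Suc n} = (\<lambda>(hs, t). t # hs) ` ({hs. length hs = n} \<times> UNIV)"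
    using lists_length_Suc_eq[of "UNIV :: 'b set" n] by simp
  have inj: "inj_on (\<lambda>(hs, t). t # hs) ({hs :: 'b list. length hs = n} \<times> UNIV)"
    by (auto simp: inj_on_def)
  show ?thesis
    unfolding eq sum.reindex[OF inj] by (simp add: sum.cartesian_product split_beta)
qed

fun selected :: "('b list \<Rightarrow> 'b \<Rightarrow> bool) \<Rightarrow> 'b list \<Rightarrow> nat" where
  "selected sel [] = 0"
| "selected sel (t # hs) = selected sel hs + of_bool (sel hs t)"

fun successes :: "('b list \<Rightarrow> 'b \<Rightarrow> bool) \<Rightarrow> ('b \<Rightarrow> bool) \<Rightarrow> 'b list \<Rightarrow> nat" where
  "successes sel ind [] = 0"
| "successes sel ind (t # hs) = successes sel ind hs + of_bool (sel hs t \<and> ind t)"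

definition exp_weight ::
    "('b list \<Rightarrow> 'b \<Rightarrow> bool) \<Rightarrow> ('b \<Rightarrow> bool) \<Rightarrow> real \<Rightarrow> real \<Rightarrow> 'b list \<Rightarrow> real" where
  "exp_weight sel ind p l hs =
     exp (l * (p * real (selected sel hs) - real (successes sel ind hs))
          - real (selected sel hs) * l\<^sup>2 / 8)"

lemma exp_weight_Nil [simp]: "exp_weight sel ind p l [] = 1"
  by (simp add: exp_weight_def)

lemma exp_weight_Cons:
  "exp_weight sel ind p l (t # hs) =
     exp_weight sel ind p l hs * (if sel hs t then exp (l * (p - of_bool (ind t)) - l\<^sup>2 / 8) else 1)"
  by (auto simp: exp_weight_def simp flip: exp_add intro!: arg_cong[where f = exp])
     (auto simp: algebra_simps)

lemma exp_weight_large_if_few_successes: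
  fixes p w :: real
  assumes "selected sel hs = m" "real (successes sel ind hs) \<le> (p - w) * real m" "0 \<le> w"
  shows "exp (2 * real m * w\<^sup>2) \<le> exp_weight sel ind p (4 * w) hs"
proof -
  have "4 * w * (w * real m) \<le> 4 * w * (p * real m - real (successes sel ind hs))"
    using assms(2,3) by (intro mult_left_mono) (auto simp: algebra_simps)
  then show ?thesis
    using assms(1) by (simp add: exp_weight_def power2_eq_square algebra_simps)
qed

lemma Hoeffdings_lemma_bernoulli:
  fixes p l :: real
  assumes "0 \<le> p" "p \<le> 1" "0 \<le> l"
  shows "p * exp (l * (p - 1) - l\<^sup>2 / 8) + (1 - p) * exp (l * p - l\<^sup>2 / 8) \<le> 1"
proof -
  define A where "A = 1 + (1 - p) * (exp l - 1)"
  have "A > 0"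
    unfolding A_def using assms by (intro add_pos_nonneg mult_nonneg_nonneg) auto
  have "- l * (1 - p) + ln A \<le> l\<^sup>2 / 8"
    unfolding A_def by (rule Hoeffdings_lemma_aux) (use assms in auto)
  then have "ln A \<le> l * (1 - p) + l\<^sup>2 / 8"
    by simp
  then have A_le: "A \<le> exp (l * (1 - p) + l\<^sup>2 / 8)"
    using \<open>A > 0\<close> by (metis exp_le_cancel_iff exp_ln)
  have "p * exp (l * (p - 1) - l\<^sup>2 / 8) + (1 - p) * exp (l * p - l\<^sup>2 / 8)
      = exp (l * (p - 1) - l\<^sup>2 / 8) * A"
    by (simp add: A_def algebra_simps flip: exp_add)
  also have "\<dots> \<le> exp (l * (p - 1) - l\<^sup>2 / 8) * exp (l * (1 - p) + l\<^sup>2 / 8)"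
    using A_le by simp
  also have "\<dots> = 1"
    by (simp flip: exp_add add: algebra_simps)
  finally show ?thesis .
qed

definition count_xz :: "bool \<Rightarrow> bool \<Rightarrow> sample list \<Rightarrow> nat" where
  "count_xz x z hs = length (filter (\<lambda>t. fst t = x \<and> snd (snd t) = z) hs)"

definition first_matches :: "bool \<Rightarrow> bool \<Rightarrow> nat \<Rightarrow> sample list \<Rightarrow> sample \<Rightarrow> bool" where
  "first_matches x z m hs t \<longleftrightarrow> fst t = x \<and> snd (snd t) = z \<and> count_xz x z hs < m"

lemma selected_all [simp]: "selected (\<lambda>_ _. True) hs = length hs"
  by (induction hs) auto

lemma selected_first_matches: "selected (first_matches x z m) hs = min (count_xz x z hs) m"
  by (induction hs) (auto simp: first_matches_def count_xz_def)

lemma card_atLeastAtMost_Suc_filter: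
  "card {k \<in> {1..Suc n}. P k} = card {k \<in> {1..n}. P k} + of_bool (P (Suc n))"
proof -
  have "{k \<in> {1..Suc n}. P k} = (if P (Suc n) then insert (Suc n) {k \<in> {1..n}. P k} else {k \<in> {1..n}. P k})"
    by (auto simp: le_Suc_eq)
  then show ?thesis
    by simp
qed

lemma cnt_eq_count_xz: "cnt X Z n x z \<omega> = count_xz x z (history X Y Z n \<omega>)"
proof (induction n)
  case (Suc n)
  then show ?case
    unfolding cnt_def card_atLeastAtMost_Suc_filter by (simp add: count_xz_def)
qed (simp add: cnt_def count_xz_def)

lemma card_Z_eq_successes:
  "card {k \<in> {1..n}. Z k \<omega> = z} = successes (\<lambda>_ _. True) (\<lambda>t. snd (snd t) = z) (history X Y Z n \<omega>)"
proof (induction n)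
  case (Suc n)
  then show ?case
    unfolding card_atLeastAtMost_Suc_filter by simp
qed simp

lemma card_first_matches_eq_successes:
  "card {k \<in> {1..n}. cnt X Z k x z \<omega> \<le> m \<and> X k \<omega> = x \<and> Y k \<omega> = y \<and> Z k \<omega> = z}
     = successes (first_matches x z m) (\<lambda>t. fst (snd t) = y) (history X Y Z n \<omega>)"
proof (induction n)
  case (Suc n)
  have "cnt X Z (Suc n) x z \<omega> =
      count_xz x z (history X Y Z n \<omega>) + of_bool (X (Suc n) \<omega> = x \<and> Z (Suc n) \<omega> = z)"
    by (simp add: cnt_eq_count_xz[where Y = Y] count_xz_def)
  moreover have "first_matches x z m (history X Y Z n \<omega>) (X (Suc n) \<omega>, Y (Suc n) \<omega>, Z (Suc n) \<omega>)
      \<longleftrightarrow> X (Suc n) \<omega> = x \<and> Z (Suc n) \<omega> = z \<and> count_xz x z (history X Y Z n \<omega>) < m"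
    by (simp add: first_matches_def)
  ultimately show ?case
    unfolding card_atLeastAtMost_Suc_filter Suc by auto
qed simp

lemma phat_eq_successes:
  "phat Z N z \<omega> = real (successes (\<lambda>_ _. True) (\<lambda>t. snd (snd t) = z) (history X Y Z N \<omega>)) / real N"
  unfolding phat_def card_Z_eq_successes[where X = X and Y = Y] ..

lemma pcheck_eq_successes:
  "pcheck X Y Z N y x z \<omega> =
     (let m = floor2 (count_xz x z (history X Y Z N \<omega>))
      in real (successes (first_matches x z m) (\<lambda>t. fst (snd t) = y) (history X Y Z N \<omega>)) / real m)"
  unfolding pcheck_def card_first_matches_eq_successes
  unfolding cnt_eq_count_xz[where Y = Y] Let_def ..

lemma floor2_eq_power:
  assumes "2 \<le> c"
  obtains k where "1 \<le> k" "floor2 c = 2 ^ k" "2 ^ k \<le> c"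
proof -
  let ?P = "\<lambda>m. \<exists>k\<ge>1. m = (2::nat) ^ k \<and> m \<le> c"
  have "?P 2"
    using assms by (intro exI[of _ 1]) auto
  then have "?P (Greatest ?P)"
    by (rule GreatestI_nat[where b = c]) auto
  then show ?thesis
    using assms that unfolding floor2_def by auto
qed

lemma floor2_less_2 [simp]: "c < 2 \<Longrightarrow> floor2 c = 1"
  by (simp add: floor2_def)

lemma floor2_power_le:
  assumes "floor2 c = 2 ^ k" "1 \<le> k"
  shows "2 ^ k \<le> c"
proof (cases "c < 2")
  case True
  have "(2::nat) \<le> 2 ^ k"
    using power_increasing[OF assms(2), of "2::nat"] by simp
  then show ?thesis
    using floor2_less_2[OF True] assms(1) by linarith
next
  case False
  then show ?thesis
    using assms(1) floor2_eq_power by (metis not_less)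
qed

lemma cnt_le: "cnt X Z N x z \<omega> \<le> N"
proof -
  have "cnt X Z N x z \<omega> \<le> card {1..N}"
    unfolding cnt_def by (rule card_mono) auto
  then show ?thesis
    by simp
qed

lemma phat_nonneg: "0 \<le> phat Z N z \<omega>"
  by (simp add: phat_def)

lemma phat_le_1: "phat Z N z \<omega> \<le> 1"
proof -
  have "card {n \<in> {1..N}. Z n \<omega> = z} \<le> card {1..N}"
    by (rule card_mono) auto
  then show ?thesis
    by (auto simp: phat_def divide_le_eq_1)
qed

locale sample_process = prob_space M for M :: "'a measure" +
  fixes X Y Z :: "nat \<Rightarrow> 'a \<Rightarrow> bool" and N :: nat
  assumes measurable_samples: "\<And>n. n \<in> {1..N} \<Longrightarrow>
          X n \<in> measurable M (count_space UNIV) \<and>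
          Y n \<in> measurable M (count_space UNIV) \<and>
          Z n \<in> measurable M (count_space UNIV)"
begin

definition cylinder :: "sample list \<Rightarrow> 'a set" where
  "cylinder hs = {\<omega> \<in> space M. history X Y Z (length hs) \<omega> = hs}"

lemma cylinder_Nil: "cylinder [] = space M"
  by (simp add: cylinder_def)

lemma cylinder_Cons:
  "cylinder (t # hs) =
     cylinder hs \<inter> {\<omega>. (X (Suc (length hs)) \<omega>, Y (Suc (length hs)) \<omega>, Z (Suc (length hs)) \<omega>) = t}"
  by (auto simp: cylinder_def)

lemma cylinder_eq_hist_event:
  "cylinder hs = hist_event M X Y Z (Suc (length hs)) (\<lambda>i. hs ! (length hs - i))"
  by (simp add: cylinder_def hist_event_def history_eq_iff)

lemma sets_sample_eq:
  assumes "n \<in> {1..N}"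
  shows "{\<omega> \<in> space M. (X n \<omega>, Y n \<omega>, Z n \<omega>) = t} \<in> events"
proof -
  have [measurable]: "X n \<in> measurable M (count_space UNIV)" "Y n \<in> measurable M (count_space UNIV)"
    "Z n \<in> measurable M (count_space UNIV)"
    using measurable_samples[OF assms] by auto
  have "{\<omega> \<in> space M. (X n \<omega>, Y n \<omega>, Z n \<omega>) = t} =
      {\<omega> \<in> space M. X n \<omega> = fst t \<and> Y n \<omega> = fst (snd t) \<and> Z n \<omega> = snd (snd t)}"
    by (cases t) auto
  also have "\<dots> \<in> events"
    by measurable
  finally show ?thesis .
qed

lemma sets_cylinder: "length hs \<le> N \<Longrightarrow> cylinder hs \<in> events"
proof (induction hs)
  case Nil
  then show ?case by (simp add: cylinder_Nil)
next
  case (Cons t hs)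
  have "cylinder (t # hs) = cylinder hs \<inter>
      {\<omega> \<in> space M. (X (Suc (length hs)) \<omega>, Y (Suc (length hs)) \<omega>, Z (Suc (length hs)) \<omega>) = t}"
    by (auto simp: cylinder_Cons cylinder_def)
  then show ?case
    using Cons sets_sample_eq[of "Suc (length hs)" t] by auto
qed

lemma measurable_history: "history X Y Z N \<in> measurable M (count_space UNIV)"
proof -
  have "history X Y Z N -` {hs} \<inter> space M = (if length hs = N then cylinder hs else {})" for hs
    by (auto simp: cylinder_def)
  then show ?thesis
    by (auto simp: measurable_count_space_eq2_countable sets_cylinder)
qed

lemma sets_history_pred: "{\<omega> \<in> space M. P (history X Y Z N \<omega>)} \<in> events"
  using measurable_history by measurable

lemma prob_cylinder_Cons_sum:
  assumes "length hs < N"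
  shows "(\<Sum>t\<in>T. prob (cylinder (t # hs))) =
    prob (cylinder hs \<inter> {\<omega>. (X (Suc (length hs)) \<omega>, Y (Suc (length hs)) \<omega>, Z (Suc (length hs)) \<omega>) \<in> T})"
proof -
  have "(\<lambda>t. cylinder (t # hs)) ` T \<subseteq> events"
    using assms by (auto intro!: sets_cylinder)
  moreover have "disjoint_family_on (\<lambda>t. cylinder (t # hs)) T"
    by (auto simp: disjoint_family_on_def cylinder_Cons)
  ultimately have "(\<Sum>t\<in>T. prob (cylinder (t # hs))) = prob (\<Union>t\<in>T. cylinder (t # hs))"
    by (intro finite_measure_finite_Union[symmetric]) auto
  also have "(\<Union>t\<in>T. cylinder (t # hs)) =
      cylinder hs \<inter> {\<omega>. (X (Suc (length hs)) \<omega>, Y (Suc (length hs)) \<omega>, Z (Suc (length hs)) \<omega>) \<in> T}"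
    by (auto simp: cylinder_Cons)
  finally show ?thesis .
qed

lemma prob_history_in:
  assumes "S \<subseteq> {hs. length hs = N}"
  shows "prob {\<omega> \<in> space M. history X Y Z N \<omega> \<in> S} = (\<Sum>hs\<in>S. prob (cylinder hs))"
proof -
  have "{\<omega> \<in> space M. history X Y Z N \<omega> \<in> S} = (\<Union>hs\<in>S. cylinder hs)"
    using assms by (auto simp: cylinder_def)
  moreover have "cylinder ` S \<subseteq> events"
    using assms by (auto intro!: sets_cylinder)
  moreover have "disjoint_family_on cylinder S"
    using assms by (force simp: disjoint_family_on_def cylinder_def subset_iff)
  ultimately show ?thesis
    using finite_subset[OF assms finite_lists_length] by (simp add: finite_measure_finite_Union)
qed

text \<open>
  The selection rule may inspect the next sample itself (for \<open>Y\<close>, its \<open>X\<close>- and \<open>Z\<close>-components);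
  only the conditional success probability given the past and the selection matters.
\<close>
definition conditional_success_prob ::
    "(sample list \<Rightarrow> sample \<Rightarrow> bool) \<Rightarrow> (sample \<Rightarrow> bool) \<Rightarrow> real \<Rightarrow> bool" where
  "conditional_success_prob sel ind p \<longleftrightarrow> (\<forall>hs. length hs < N \<longrightarrow>
     (\<Sum>t | sel hs t \<and> ind t. prob (cylinder (t # hs))) = p * (\<Sum>t | sel hs t. prob (cylinder (t # hs))))"

lemma exp_weight_supermartingale_step:
  assumes "conditional_success_prob sel ind p" "length hs < N" "0 \<le> p" "p \<le> 1" "0 \<le> l"
  shows "(\<Sum>t\<in>UNIV. exp_weight sel ind p l (t # hs) * prob (cylinder (t # hs)))
           \<le> exp_weight sel ind p l hs * prob (cylinder hs)"
proof -
  define m where "m t = prob (cylinder (t # hs))" for t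
  define a where "a = exp (l * (p - 1) - l\<^sup>2 / 8)"
  define b where "b = exp (l * p - l\<^sup>2 / 8)"
  define S where "S = (\<Sum>t | sel hs t. m t)"
  define S_succ where "S_succ = (\<Sum>t | sel hs t \<and> ind t. m t)"
  define S_fail where "S_fail = (\<Sum>t | sel hs t \<and> \<not> ind t. m t)"
  have "S = S_succ + S_fail"
    unfolding S_def S_succ_def S_fail_def by (subst sum.union_disjoint[symmetric]) (auto intro: sum.cong)
  moreover have "S_succ = p * S"
    using assms(1,2) by (simp add: conditional_success_prob_def S_succ_def S_def m_def)
  ultimately have S_fail: "S_fail = (1 - p) * S"
    by (simp add: algebra_simps)
  have "S \<ge> 0"
    unfolding S_def m_def by (simp add: sum_nonneg)
  have "(\<Sum>t\<in>UNIV. (if sel hs t then exp (l * (p - of_bool (ind t)) - l\<^sup>2 / 8) else 1) * m t)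
      = (\<Sum>t\<in>UNIV. m t + (if sel hs t \<and> ind t then (a - 1) * m t else 0)
                         + (if sel hs t \<and> \<not> ind t then (b - 1) * m t else 0))"
    by (intro sum.cong) (auto simp: a_def b_def algebra_simps)
  also have "\<dots> = (\<Sum>t\<in>UNIV. m t) + (a - 1) * S_succ + (b - 1) * S_fail"
    by (simp add: sum.distrib S_succ_def S_fail_def sum_distrib_left sum.If_cases)
  also have "\<dots> = (\<Sum>t\<in>UNIV. m t) + S * (p * a + (1 - p) * b - 1)"
    unfolding S_fail \<open>S_succ = p * S\<close> by (simp add: algebra_simps)
  also have "\<dots> \<le> (\<Sum>t\<in>UNIV. m t)"
    using Hoeffdings_lemma_bernoulli[OF assms(3-5)] \<open>S \<ge> 0\<close> unfolding a_def b_def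
    by (simp add: mult_nonneg_nonpos)
  also have "\<dots> = prob (cylinder hs)"
    unfolding m_def using prob_cylinder_Cons_sum[OF assms(2), of UNIV] by simp
  finally have "exp_weight sel ind p l hs *
        (\<Sum>t\<in>UNIV. (if sel hs t then exp (l * (p - of_bool (ind t)) - l\<^sup>2 / 8) else 1) * m t)
      \<le> exp_weight sel ind p l hs * prob (cylinder hs)"
    by (rule mult_left_mono) (simp add: exp_weight_def)
  then show ?thesis
    by (simp add: exp_weight_Cons m_def sum_distrib_left mult.assoc)
qed

lemma sum_exp_weight_le_1:
  assumes "conditional_success_prob sel ind p" "0 \<le> p" "p \<le> 1" "0 \<le> l"
  shows "k \<le> N \<Longrightarrow> (\<Sum>hs | length hs = k. exp_weight sel ind p l hs * prob (cylinder hs)) \<le> 1"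
proof (induction k)
  case 0
  then show ?case by (simp add: cylinder_Nil prob_space)
next
  case (Suc k)
  have "(\<Sum>hs | length hs = Suc k. exp_weight sel ind p l hs * prob (cylinder hs))
      = (\<Sum>hs | length hs = k. \<Sum>t\<in>UNIV. exp_weight sel ind p l (t # hs) * prob (cylinder (t # hs)))"
    by (rule sum_lists_length_Suc)
  also have "\<dots> \<le> (\<Sum>hs | length hs = k. exp_weight sel ind p l hs * prob (cylinder hs))"
    using Suc.prems by (intro sum_mono exp_weight_supermartingale_step assms) auto
  also have "\<dots> \<le> 1"
    using Suc by simp
  finally show ?case .
qed

theorem prob_few_successes_le:
  fixes p w :: real
  assumes "conditional_success_prob sel ind p" "0 \<le> p" "p \<le> 1" "0 \<le> w"
  shows "prob {\<omega> \<in> space M. selected sel (history X Y Z N \<omega>) = m \<and>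
                 real (successes sel ind (history X Y Z N \<omega>)) \<le> (p - w) * real m}
           \<le> exp (- 2 * real m * w\<^sup>2)"
proof -
  define S where "S = {hs. length hs = N \<and> selected sel hs = m \<and>
                             real (successes sel ind hs) \<le> (p - w) * real m}"
  define W where "W = exp_weight sel ind p (4 * w)"
  have "prob {\<omega> \<in> space M. history X Y Z N \<omega> \<in> S} = (\<Sum>hs\<in>S. prob (cylinder hs))"
    by (rule prob_history_in) (auto simp: S_def)
  also have "\<dots> \<le> (\<Sum>hs\<in>S. exp (- 2 * real m * w\<^sup>2) * (W hs * prob (cylinder hs)))"
  proof (intro sum_mono)
    fix hs assume "hs \<in> S"
    then have large: "1 \<le> exp (- 2 * real m * w\<^sup>2) * W hs"
      using exp_weight_large_if_few_successes[of sel hs m ind p w] assms(4)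
      by (auto simp: S_def W_def exp_minus field_simps)
    then show "prob (cylinder hs) \<le> exp (- 2 * real m * w\<^sup>2) * (W hs * prob (cylinder hs))"
      using mult_right_mono[OF large measure_nonneg[of M "cylinder hs"]] by (simp add: mult.assoc)
  qed
  also have "\<dots> \<le> exp (- 2 * real m * w\<^sup>2) * (\<Sum>hs | length hs = N. W hs * prob (cylinder hs))"
    unfolding sum_distrib_left[symmetric]
    by (intro mult_left_mono sum_mono2 finite_lists_length)
       (auto simp: S_def W_def exp_weight_def)
  also have "\<dots> \<le> exp (- 2 * real m * w\<^sup>2)"
    using sum_exp_weight_le_1[OF assms(1-3), of "4 * w" N] assms(4)
    by (simp add: W_def mult_left_le)
  finally show ?thesis
    by (simp add: S_def)
qed

lemma sets_phat_le: "{\<omega> \<in> space M. phat Z N z \<omega> \<le> c} \<in> events"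
  unfolding phat_eq_successes[where X = X and Y = Y] by (rule sets_history_pred)

lemma sets_pcheck_le:
  "{\<omega> \<in> space M. floor2 (cnt X Z N x z \<omega>) = m \<and> pcheck X Y Z N y x z \<omega> \<le> c} \<in> events"
  unfolding pcheck_eq_successes cnt_eq_count_xz[where Y = Y] Let_def by (rule sets_history_pred)

end

definition radius_Z :: "real \<Rightarrow> nat \<Rightarrow> real" where
  "radius_Z \<delta> N = sqrt (ln (12 / \<delta>) / (2 * real N))"

definition radius_Y :: "real \<Rightarrow> nat \<Rightarrow> real" where
  "radius_Y \<delta> k = sqrt ((2 * ln (real k) + ln (20 / \<delta>)) / (2 * 2 ^ k))"

lemma radius_Z_nonneg: "0 < \<delta> \<Longrightarrow> \<delta> \<le> 12 \<Longrightarrow> 0 \<le> radius_Z \<delta> N"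
  by (simp add: radius_Z_def)

lemma radius_Y_nonneg: "0 < \<delta> \<Longrightarrow> \<delta> \<le> 20 \<Longrightarrow> 1 \<le> k \<Longrightarrow> 0 \<le> radius_Y \<delta> k"
  by (simp add: radius_Y_def)

lemma exp_radius_Z:
  assumes "0 < \<delta>" "\<delta> \<le> 12" "0 < N"
  shows "exp (- 2 * real N * (radius_Z \<delta> N)\<^sup>2) = \<delta> / 12"
  using assms by (simp add: radius_Z_def exp_minus)

lemma exp_radius_Y:
  assumes "0 < \<delta>" "\<delta> \<le> 20" "1 \<le> k"
  shows "exp (- 2 * 2 ^ k * (radius_Y \<delta> k)\<^sup>2) = \<delta> / (20 * (real k)\<^sup>2)"
proof -
  have "2 * 2 ^ k * (radius_Y \<delta> k)\<^sup>2 = 2 * ln (real k) + ln (20 / \<delta>)"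
    using assms by (simp add: radius_Y_def)
  also have "\<dots> = ln ((real k)\<^sup>2) + ln (20 / \<delta>)"
    using assms by (simp add: ln_realpow)
  also have "\<dots> = ln ((real k)\<^sup>2 * (20 / \<delta>))"
    by (rule ln_mult_pos[symmetric]) (use assms in auto)
  finally show ?thesis
    using assms by (simp add: exp_minus)
qed

lemma width_eq_radius_Y: "floor2 c = 2 ^ k \<Longrightarrow> 1 \<le> k \<Longrightarrow> width c \<delta> = ereal (radius_Y \<delta> k)"
  using power_increasing[of 1 k "2::nat"] by (simp add: width_def radius_Y_def)

lemma sum_inverse_squares_le: "1 \<le> n \<Longrightarrow> (\<Sum>k=1..n. 1 / (real k)\<^sup>2) \<le> 2 - 1 / real n"
proof (induction n rule: dec_induct)
  case (step n)
  have "1 / (real (Suc n))\<^sup>2 \<le> 1 / (real n * real (Suc n))"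
    using step by (intro divide_left_mono) (auto simp: power2_eq_square)
  also have "\<dots> = 1 / real n - 1 / real (Suc n)"
    using step by (simp add: field_simps)
  finally have "1 / (real (Suc n))\<^sup>2 \<le> 1 / real n - 1 / real (Suc n)" .
  moreover have "(\<Sum>k=1..Suc n. 1 / (real k)\<^sup>2) = (\<Sum>k=1..n. 1 / (real k)\<^sup>2) + 1 / (real (Suc n))\<^sup>2"
    by simp
  ultimately show ?case
    using step.IH by linarith
qed simp

lemma product_estimate_error_le:
  fixes a b a' b' s w :: real
  assumes "0 \<le> a" "a \<le> 1" "0 \<le> b'" "b' \<le> 1" "a - a' < w" "b - b' < s" "0 \<le> s" "0 \<le> w"
  shows "a * b - a' * b' \<le> s + w"
proof -
  have "a * (b - b') \<le> a * s" "b' * (a - a') \<le> b' * w"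
    using assms by (auto intro!: mult_left_mono)
  moreover have "a * s \<le> s" "b' * w \<le> w"
    using assms by (auto simp: mult_left_le_one_le)
  moreover have "a * b - a' * b' = a * (b - b') + b' * (a - a')"
    by (simp add: algebra_simps)
  ultimately show ?thesis
    by linarith
qed

lemma causal_effect_le_upper_bound:
  assumes "0 < \<delta>" "\<delta> \<le> 20" "0 \<le> r"
    and Z_close: "\<And>z. pmf \<pi> z - phat Z N z \<omega> < r"
    and Y_close: "\<And>z k. 1 \<le> k \<Longrightarrow> k \<le> N \<Longrightarrow> floor2 (cnt X Z N x z \<omega>) = 2 ^ k \<Longrightarrow>
                   pmf (q x z) y - pcheck X Y Z N y x z \<omega> < radius_Y \<delta> k"
  shows "ereal (\<Sum>z\<in>UNIV. pmf (q x z) y * pmf \<pi> z)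
           \<le> ereal ((\<Sum>z\<in>UNIV. phat Z N z \<omega> * pcheck X Y Z N y x z \<omega>) + 2 * r)
             + (\<Sum>z\<in>UNIV. width (cnt X Z N x z \<omega>) \<delta>)"
proof (cases "\<exists>z. cnt X Z N x z \<omega> < 2")
  case True
  then obtain z where "cnt X Z N x z \<omega> < 2"
    by blast
  then have "width (cnt X Z N x z \<omega>) \<delta> = \<infinity>"
    by (simp add: width_def)
  then have "(\<Sum>z\<in>UNIV. width (cnt X Z N x z \<omega>) \<delta>) = \<infinity>"
    by (auto simp: sum_Pinfty)
  then show ?thesis
    by simp
next
  case False
  have "\<exists>k. 1 \<le> k \<and> floor2 (cnt X Z N x z \<omega>) = 2 ^ k \<and> 2 ^ k \<le> cnt X Z N x z \<omega>" for z
    using False floor2_eq_power[of "cnt X Z N x z \<omega>"] by (metis not_less)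
  then obtain k where k: "\<And>z. 1 \<le> k z \<and> floor2 (cnt X Z N x z \<omega>) = 2 ^ k z \<and> 2 ^ k z \<le> cnt X Z N x z \<omega>"
    by metis
  have "k z \<le> N" for z
    using less_exp[of "k z"] k[of z] cnt_le[of X Z N x z \<omega>] by linarith
  then have "pmf (q x z) y * pmf \<pi> z - pcheck X Y Z N y x z \<omega> * phat Z N z \<omega> \<le> r + radius_Y \<delta> (k z)" for z
    using k[of z] assms(1-3)
    by (intro product_estimate_error_le Z_close Y_close radius_Y_nonneg)
       (simp_all add: phat_nonneg phat_le_1 pmf_le_1)
  then have "(\<Sum>z\<in>UNIV. pmf (q x z) y * pmf \<pi> z - pcheck X Y Z N y x z \<omega> * phat Z N z \<omega>)
      \<le> (\<Sum>z\<in>UNIV. r + radius_Y \<delta> (k z))"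
    by (rule sum_mono)
  then have "(\<Sum>z\<in>UNIV. pmf (q x z) y * pmf \<pi> z)
      \<le> (\<Sum>z\<in>UNIV. phat Z N z \<omega> * pcheck X Y Z N y x z \<omega>) + 2 * r + (\<Sum>z\<in>UNIV. radius_Y \<delta> (k z))"
    by (simp add: sum_subtractf sum.distrib mult.commute)
  moreover have "(\<Sum>z\<in>UNIV. width (cnt X Z N x z \<omega>) \<delta>) = ereal (\<Sum>z\<in>UNIV. radius_Y \<delta> (k z))"
    using k by (simp add: width_eq_radius_Y)
  ultimately show ?thesis
    by simp
qed

locale causal_sampling = sample_process +
  fixes \<pi> :: "bool pmf" and q :: "bool \<Rightarrow> bool \<Rightarrow> bool pmf"
  assumes Z_cond: "\<And>n h z. n \<in> {1..N} \<Longrightarrow>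
          prob (hist_event M X Y Z n h \<inter> {\<omega>. Z n \<omega> = z}) = pmf \<pi> z * prob (hist_event M X Y Z n h)"
    and Y_cond: "\<And>n h x z y. n \<in> {1..N} \<Longrightarrow>
          prob (hist_event M X Y Z n h \<inter> {\<omega>. Z n \<omega> = z \<and> X n \<omega> = x \<and> Y n \<omega> = y})
            = pmf (q x z) y * prob (hist_event M X Y Z n h \<inter> {\<omega>. Z n \<omega> = z \<and> X n \<omega> = x})"
begin

lemma conditional_success_prob_Z:
  "conditional_success_prob (\<lambda>_ _. True) (\<lambda>t. snd (snd t) = z) (pmf \<pi> z)"
  unfolding conditional_success_prob_def
proof (intro allI impI)
  fix hs :: "sample list"
  assume len: "length hs < N"
  let ?n = "Suc (length hs)" and ?h = "\<lambda>i. hs ! (length hs - i)"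
  have "(\<Sum>t | True \<and> snd (snd t) = z. prob (cylinder (t # hs)))
      = prob (hist_event M X Y Z ?n ?h \<inter> {\<omega>. Z ?n \<omega> = z})"
    unfolding prob_cylinder_Cons_sum[OF len] cylinder_eq_hist_event[of hs] by (auto intro: arg_cong[where f = prob])
  also have "\<dots> = pmf \<pi> z * prob (hist_event M X Y Z ?n ?h)"
    using len by (intro Z_cond) auto
  also have "prob (hist_event M X Y Z ?n ?h) = (\<Sum>t | True. prob (cylinder (t # hs)))"
    unfolding prob_cylinder_Cons_sum[OF len] cylinder_eq_hist_event[of hs] by simp
  finally show "(\<Sum>t | True \<and> snd (snd t) = z. prob (cylinder (t # hs)))
      = pmf \<pi> z * (\<Sum>t | True. prob (cylinder (t # hs)))" .
qed

lemma conditional_success_prob_Y: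
  "conditional_success_prob (first_matches x z m) (\<lambda>t. fst (snd t) = y) (pmf (q x z) y)"
  unfolding conditional_success_prob_def
proof (intro allI impI)
  fix hs :: "sample list"
  assume len: "length hs < N"
  let ?n = "Suc (length hs)" and ?h = "\<lambda>i. hs ! (length hs - i)"
  show "(\<Sum>t | first_matches x z m hs t \<and> fst (snd t) = y. prob (cylinder (t # hs)))
      = pmf (q x z) y * (\<Sum>t | first_matches x z m hs t. prob (cylinder (t # hs)))"
  proof (cases "count_xz x z hs < m")
    case True
    have "(\<Sum>t | first_matches x z m hs t \<and> fst (snd t) = y. prob (cylinder (t # hs)))
        = prob (hist_event M X Y Z ?n ?h \<inter> {\<omega>. Z ?n \<omega> = z \<and> X ?n \<omega> = x \<and> Y ?n \<omega> = y})"
      unfolding prob_cylinder_Cons_sum[OF len] cylinder_eq_hist_event[of hs]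
      using True by (auto simp: first_matches_def intro: arg_cong[where f = prob])
    also have "\<dots> = pmf (q x z) y * prob (hist_event M X Y Z ?n ?h \<inter> {\<omega>. Z ?n \<omega> = z \<and> X ?n \<omega> = x})"
      using len by (intro Y_cond) auto
    also have "prob (hist_event M X Y Z ?n ?h \<inter> {\<omega>. Z ?n \<omega> = z \<and> X ?n \<omega> = x})
        = (\<Sum>t | first_matches x z m hs t. prob (cylinder (t # hs)))"
      unfolding prob_cylinder_Cons_sum[OF len] cylinder_eq_hist_event[of hs]
      using True by (auto simp: first_matches_def intro: arg_cong[where f = prob])
    finally show ?thesis .
  qed (simp add: first_matches_def)
qed

lemma prob_phat_le:
  assumes "0 < N" "0 \<le> s"
  shows "prob {\<omega> \<in> space M. phat Z N z \<omega> \<le> pmf \<pi> z - s} \<le> exp (- 2 * real N * s\<^sup>2)"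
proof -
  have "{\<omega> \<in> space M. phat Z N z \<omega> \<le> pmf \<pi> z - s} =
      {\<omega> \<in> space M. selected (\<lambda>_ _. True) (history X Y Z N \<omega>) = N \<and>
         real (successes (\<lambda>_ _. True) (\<lambda>t. snd (snd t) = z) (history X Y Z N \<omega>)) \<le> (pmf \<pi> z - s) * real N}"
    using assms(1) by (simp add: phat_eq_successes[where X = X and Y = Y] pos_divide_le_eq)
  then show ?thesis
    using prob_few_successes_le[OF conditional_success_prob_Z pmf_nonneg pmf_le_1 assms(2), where m = N]
    by simp
qed

lemma prob_pcheck_le:
  assumes "1 \<le> k" "0 \<le> w"
  shows "prob {\<omega> \<in> space M. floor2 (cnt X Z N x z \<omega>) = 2 ^ k \<and> pcheck X Y Z N y x z \<omega> \<le> pmf (q x z) y - w}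
           \<le> exp (- 2 * 2 ^ k * w\<^sup>2)"
proof -
  let ?sel = "first_matches x z (2 ^ k)" and ?ind = "\<lambda>t. fst (snd t) = y"
  have "{\<omega> \<in> space M. floor2 (cnt X Z N x z \<omega>) = 2 ^ k \<and> pcheck X Y Z N y x z \<omega> \<le> pmf (q x z) y - w}
      \<subseteq> {\<omega> \<in> space M. selected ?sel (history X Y Z N \<omega>) = 2 ^ k \<and>
           real (successes ?sel ?ind (history X Y Z N \<omega>)) \<le> (pmf (q x z) y - w) * real (2 ^ k)}"
  proof safe
    fix \<omega> assume fl: "floor2 (cnt X Z N x z \<omega>) = 2 ^ k"
    have "2 ^ k \<le> count_xz x z (history X Y Z N \<omega>)"
      using floor2_power_le[OF fl assms(1)] by (simp add: cnt_eq_count_xz[where Y = Y])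
    then show "selected ?sel (history X Y Z N \<omega>) = 2 ^ k"
      by (simp add: selected_first_matches)
    assume "pcheck X Y Z N y x z \<omega> \<le> pmf (q x z) y - w"
    then show "real (successes ?sel ?ind (history X Y Z N \<omega>)) \<le> (pmf (q x z) y - w) * real (2 ^ k)"
      using fl by (simp add: pcheck_eq_successes cnt_eq_count_xz[where Y = Y] pos_divide_le_eq)
  qed
  then have "prob {\<omega> \<in> space M. floor2 (cnt X Z N x z \<omega>) = 2 ^ k \<and> pcheck X Y Z N y x z \<omega> \<le> pmf (q x z) y - w}
      \<le> prob {\<omega> \<in> space M. selected ?sel (history X Y Z N \<omega>) = 2 ^ k \<and>
           real (successes ?sel ?ind (history X Y Z N \<omega>)) \<le> (pmf (q x z) y - w) * real (2 ^ k)}"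
    by (intro finite_measure_mono sets_history_pred)
  also have "\<dots> \<le> exp (- 2 * 2 ^ k * w\<^sup>2)"
    using prob_few_successes_le[OF conditional_success_prob_Y pmf_nonneg pmf_le_1 assms(2), where m = "2 ^ k"]
    by simp
  finally show ?thesis .
qed

definition Z_deviation :: "real \<Rightarrow> bool \<Rightarrow> 'a set" where
  "Z_deviation \<delta> z = {\<omega> \<in> space M. phat Z N z \<omega> \<le> pmf \<pi> z - radius_Z \<delta> N}"

definition Y_deviation :: "real \<Rightarrow> bool \<Rightarrow> bool \<Rightarrow> bool \<Rightarrow> nat \<Rightarrow> 'a set" where
  "Y_deviation \<delta> x y z k = {\<omega> \<in> space M. floor2 (cnt X Z N x z \<omega>) = 2 ^ k \<and>
                               pcheck X Y Z N y x z \<omega> \<le> pmf (q x z) y - radius_Y \<delta> k}"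

definition bad_event :: "real \<Rightarrow> bool \<Rightarrow> bool \<Rightarrow> 'a set" where
  "bad_event \<delta> x y = (\<Union>z. Z_deviation \<delta> z) \<union> (\<Union>z. \<Union>k\<in>{1..N}. Y_deviation \<delta> x y z k)"

lemma sets_Z_deviation: "Z_deviation \<delta> z \<in> events"
  unfolding Z_deviation_def by (rule sets_phat_le)

lemma sets_Y_deviation: "Y_deviation \<delta> x y z k \<in> events"
  unfolding Y_deviation_def by (rule sets_pcheck_le)

lemma sets_bad_event: "bad_event \<delta> x y \<in> events"
  unfolding bad_event_def by (intro sets.Un sets.finite_UN sets_Z_deviation sets_Y_deviation) auto

lemma prob_Z_deviation_le:
  assumes "0 < \<delta>" "\<delta> \<le> 1" "0 < N"
  shows "prob (Z_deviation \<delta> z) \<le> \<delta> / 12"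
proof -
  have "prob (Z_deviation \<delta> z) \<le> exp (- 2 * real N * (radius_Z \<delta> N)\<^sup>2)"
    unfolding Z_deviation_def using assms by (intro prob_phat_le radius_Z_nonneg) auto
  also have "\<dots> = \<delta> / 12"
    using assms by (intro exp_radius_Z) auto
  finally show ?thesis .
qed

lemma prob_Y_deviation_le:
  assumes "0 < \<delta>" "\<delta> \<le> 1" "1 \<le> k"
  shows "prob (Y_deviation \<delta> x y z k) \<le> \<delta> / 20 * (1 / (real k)\<^sup>2)"
proof -
  have "prob (Y_deviation \<delta> x y z k) \<le> exp (- 2 * 2 ^ k * (radius_Y \<delta> k)\<^sup>2)"
    unfolding Y_deviation_def using assms by (intro prob_pcheck_le radius_Y_nonneg) auto
  also have "\<dots> = \<delta> / 20 * (1 / (real k)\<^sup>2)"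
    using assms by (subst exp_radius_Y) auto
  finally show ?thesis .
qed

lemma prob_Y_deviations_le:
  assumes "0 < \<delta>" "\<delta> \<le> 1" "0 < N"
  shows "prob (\<Union>k\<in>{1..N}. Y_deviation \<delta> x y z k) \<le> \<delta> / 10"
proof -
  have "prob (\<Union>k\<in>{1..N}. Y_deviation \<delta> x y z k) \<le> (\<Sum>k=1..N. prob (Y_deviation \<delta> x y z k))"
    by (intro measure_UNION_le sets_Y_deviation) auto
  also have "\<dots> \<le> (\<Sum>k=1..N. \<delta> / 20 * (1 / (real k)\<^sup>2))"
    using assms by (intro sum_mono prob_Y_deviation_le) auto
  also have "\<dots> = \<delta> / 20 * (\<Sum>k=1..N. 1 / (real k)\<^sup>2)"
    by (simp add: sum_distrib_left)
  also have "\<dots> \<le> \<delta> / 20 * 2"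
    using order.trans[OF sum_inverse_squares_le, of N 2] assms by (intro mult_left_mono) auto
  finally show ?thesis
    by simp
qed

lemma prob_bad_event_le:
  assumes "0 < \<delta>" "\<delta> \<le> 1" "0 < N"
  shows "prob (bad_event \<delta> x y) \<le> \<delta> / 2"
proof -
  have "prob (bad_event \<delta> x y)
      \<le> prob (\<Union>z. Z_deviation \<delta> z) + prob (\<Union>z. \<Union>k\<in>{1..N}. Y_deviation \<delta> x y z k)"
    unfolding bad_event_def
    by (intro measure_Un_le sets.finite_UN sets_Z_deviation sets_Y_deviation) auto
  also have "\<dots> \<le> (\<Sum>z\<in>UNIV. prob (Z_deviation \<delta> z)) + (\<Sum>z\<in>UNIV. prob (\<Union>k\<in>{1..N}. Y_deviation \<delta> x y z k))"
    by (intro add_mono measure_UNION_le sets.finite_UN sets_Z_deviation sets_Y_deviation) auto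
  also have "\<dots> \<le> CARD(bool) * (\<delta> / 12) + CARD(bool) * (\<delta> / 10)"
    by (intro add_mono sum_bounded_above prob_Z_deviation_le prob_Y_deviations_le assms)
  also have "\<dots> \<le> \<delta> / 2"
    using assms by simp
  finally show ?thesis .
qed

lemma in_Gamma_outside_bad_event:
  assumes "0 < \<delta>" "\<delta> \<le> 1" "\<omega> \<in> space M" "\<omega> \<notin> bad_event \<delta> x y"
    and "(\<Sum>z\<in>UNIV. pmf (q x z) y * pmf \<pi> z) > \<delta> / 2"
  shows "y \<in> Gamma X Y Z N \<delta> x \<omega>"
proof -
  have Z_close: "pmf \<pi> z - phat Z N z \<omega> < radius_Z \<delta> N" for z
  proof -
    have "\<omega> \<notin> Z_deviation \<delta> z"
      using assms(4) unfolding bad_event_def by blast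
    then have "\<not> phat Z N z \<omega> \<le> pmf \<pi> z - radius_Z \<delta> N"
      using assms(3) unfolding Z_deviation_def by blast
    then show ?thesis
      by linarith
  qed
  have Y_close: "pmf (q x z) y - pcheck X Y Z N y x z \<omega> < radius_Y \<delta> k"
    if "1 \<le> k" "k \<le> N" "floor2 (cnt X Z N x z \<omega>) = 2 ^ k" for z k
  proof -
    have "\<omega> \<notin> Y_deviation \<delta> x y z k"
      using assms(4) that(1,2) unfolding bad_event_def by auto
    then have "\<not> pcheck X Y Z N y x z \<omega> \<le> pmf (q x z) y - radius_Y \<delta> k"
      using assms(3) that(3) unfolding Y_deviation_def by blast
    then show ?thesis
      by linarith
  qed
  have "ereal (\<delta> / 2) < ereal (\<Sum>z\<in>UNIV. pmf (q x z) y * pmf \<pi> z)"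
    using assms(5) by simp
  also have "\<dots> \<le> ereal ((\<Sum>z\<in>UNIV. phat Z N z \<omega> * pcheck X Y Z N y x z \<omega>) + 2 * radius_Z \<delta> N)
                  + (\<Sum>z\<in>UNIV. width (cnt X Z N x z \<omega>) \<delta>)"
    using assms(1,2) Z_close Y_close by (intro causal_effect_le_upper_bound radius_Z_nonneg) auto
  finally show ?thesis
    by (simp add: Gamma_def radius_Z_def)
qed

lemma unlikely_or_in_Gamma_whp:
  assumes "0 < \<delta>" "\<delta> \<le> 1" "0 < N"
  shows "(\<Sum>z\<in>UNIV. pmf (q x z) y * pmf \<pi> z) \<le> \<delta> / 2 \<or>
         (\<exists>B\<in>events. prob B \<le> \<delta> / 2 \<and> (\<forall>\<omega>\<in>space M - B. y \<in> Gamma X Y Z N \<delta> x \<omega>))"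
  using sets_bad_event prob_bad_event_le[OF assms] in_Gamma_outside_bad_event[OF assms(1,2)]
  by (cases "(\<Sum>z\<in>UNIV. pmf (q x z) y * pmf \<pi> z) \<le> \<delta> / 2") (auto intro!: bexI[of _ "bad_event \<delta> x y"])

end

lemma (in prob_space) prob_notin_prediction_set_le:
  fixes V :: "'a \<Rightarrow> 'b::finite" and G :: "'a \<Rightarrow> 'b set" and \<epsilon> :: real
  assumes "V \<in> measurable M (count_space UNIV)"
    and "\<And>v. prob {\<omega> \<in> space M. V \<omega> = v} \<le> \<epsilon> \<or>
               (\<exists>B\<in>events. prob B \<le> \<epsilon> \<and> (\<forall>\<omega>\<in>space M - B. v \<in> G \<omega>))"
  shows "prob {\<omega> \<in> space M. V \<omega> \<notin> G \<omega>} \<le> CARD('b) * \<epsilon>"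
proof -
  have "\<exists>C. C \<in> events \<and> prob C \<le> \<epsilon> \<and> {\<omega> \<in> space M. V \<omega> = v \<and> v \<notin> G \<omega>} \<subseteq> C" for v
  proof (cases "prob {\<omega> \<in> space M. V \<omega> = v} \<le> \<epsilon>")
    case True
    moreover have "{\<omega> \<in> space M. V \<omega> = v} \<in> events"
      using assms(1) by measurable
    ultimately show ?thesis
      by blast
  next
    case False
    then show ?thesis
      using assms(2)[of v] by blast
  qed
  then have "\<forall>v. \<exists>C. C \<in> events \<and> prob C \<le> \<epsilon> \<and> {\<omega> \<in> space M. V \<omega> = v \<and> v \<notin> G \<omega>} \<subseteq> C"
    by blast
  then obtain C where C: "\<And>v. C v \<in> events" "\<And>v. prob (C v) \<le> \<epsilon>"
    "\<And>v. {\<omega> \<in> space M. V \<omega> = v \<and> v \<notin> G \<omega>} \<subseteq> C v"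
    using choice[of "\<lambda>v C. C \<in> events \<and> prob C \<le> \<epsilon> \<and> {\<omega> \<in> space M. V \<omega> = v \<and> v \<notin> G \<omega>} \<subseteq> C"]
    by blast
  have "{\<omega> \<in> space M. V \<omega> \<notin> G \<omega>} \<subseteq> (\<Union>v. C v)"
    using C(3) by blast
  then have "prob {\<omega> \<in> space M. V \<omega> \<notin> G \<omega>} \<le> prob (\<Union>v. C v)"
    using C(1) by (intro finite_measure_mono) auto
  also have "\<dots> \<le> (\<Sum>v\<in>UNIV. prob (C v))"
    using C(1) by (intro measure_UNION_le) auto
  also have "\<dots> \<le> CARD('b) * \<epsilon>"
    using sum_mono[of UNIV "\<lambda>v. prob (C v)" "\<lambda>_. \<epsilon>"] C(2) by simp
  finally show ?thesis .
qed

theorem corollary1: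
  fixes M :: "'a measure"
    and X Y Z :: "nat \<Rightarrow> 'a \<Rightarrow> bool"
    and Yt :: "'a \<Rightarrow> bool"
    and \<pi> :: "bool pmf"
    and q :: "bool \<Rightarrow> bool \<Rightarrow> bool pmf"
    and N :: nat and \<delta> :: real and xt :: bool
  assumes "prob_space M"
    and "N \<ge> 1"
    and meas: "\<And>n. n \<in> {1..N} \<Longrightarrow>
          X n \<in> measurable M (count_space UNIV) \<and>
          Y n \<in> measurable M (count_space UNIV) \<and>
          Z n \<in> measurable M (count_space UNIV)"
    and measY: "Yt \<in> measurable M (count_space UNIV)"
    and Zcond: "\<And>n h z. n \<in> {1..N} \<Longrightarrow>
          measure M (hist_event M X Y Z n h \<inter> {\<omega>. Z n \<omega> = z})
            = pmf \<pi> z * measure M (hist_event M X Y Z n h)"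
    and Ycond: "\<And>n h x z y. n \<in> {1..N} \<Longrightarrow>
          measure M (hist_event M X Y Z n h \<inter> {\<omega>. Z n \<omega> = z \<and> X n \<omega> = x \<and> Y n \<omega> = y})
            = pmf (q x z) y * measure M (hist_event M X Y Z n h \<inter> {\<omega>. Z n \<omega> = z \<and> X n \<omega> = x})"
    and "\<delta> > 0"
    and Ydist: "\<And>y. measure M {\<omega> \<in> space M. Yt \<omega> = y} = (\<Sum>z\<in>UNIV. pmf (q xt z) y * pmf \<pi> z)"
  shows "measure M {\<omega> \<in> space M. Yt \<omega> \<notin> Gamma X Y Z N \<delta> xt \<omega>} \<le> \<delta>"
proof -
  interpret causal_sampling M X Y Z N \<pi> q
    by (intro causal_sampling.intro sample_process.intro causal_sampling_axioms.intro
        sample_process_axioms.intro assms(1) meas Zcond Ycond)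
  show ?thesis
  proof (cases "\<delta> \<le> 1")
    case False
    then show ?thesis
      using prob_le_1[of "{\<omega> \<in> space M. Yt \<omega> \<notin> Gamma X Y Z N \<delta> xt \<omega>}"] by linarith
  next
    case True
    have "prob {\<omega> \<in> space M. Yt \<omega> \<notin> Gamma X Y Z N \<delta> xt \<omega>} \<le> CARD(bool) * (\<delta> / 2)"
      using unlikely_or_in_Gamma_whp[OF \<open>\<delta> > 0\<close> True] \<open>N \<ge> 1\<close> Ydist
      by (intro prob_notin_prediction_set_le[OF measY]) auto
    then show ?thesis
      by simp
  qed
qed

end
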